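(* For a two-port FAS ($N=2$) with correlation parameter $\mu=\mu_2\in(0,1)$, the level crossing rate of $|h_{\rm FAS}|=\max\{|h_1|,|h_2|\}$ at threshold $x_{\rm th}>0$ is $$L(x_{\rm th})=\frac{2\sqrt{2\pi}\, f_D\,x_{\rm th}}{\sigma ^{3}(1-\mu^{2})}\, e^{-\frac {x_{\rm th}^2}{\sigma ^{2}(1-\mu^2)}} \sum_{k=0}^{\infty} \frac{\left(\mu x_{\rm th}\right)^{2k}}{(k!)^2 \left( \sigma ^{2}(1-\mu^2) \right)^{k-1}}\,\gamma \!\left( k+1, \frac{x_{\rm th}^2}{\sigma ^{2}(1-\mu^2)} \right),$$ where $\gamma(\cdot,\cdot)$ is the lower incomplete Gamma function.
   Context: Two-port FAS channel model: $h_1=\sigma x_0+j\sigma y_0$, $h_2=\sigma(\sqrt{1-\mu^2}\,x_2+\mu x_0)+j\sigma(\sqrt{1-\mu^2}\,y_2+\mu y_0)$, with $x_0,x_2,y_0,y_2$ independent real Gaussian with mean $0$ and variance $1/2$, $\sigma>0$. The joint envelope density is $p_{|h_1|,|h_2|}(x_1,x_2)=\frac{4x_1x_2}{\sigma^4(1-\mu^2)}e^{-\frac{x_1^2+x_2^2}{\sigma^2(1-\mu^2)}}I_0\!\left(\frac{2\mu x_1x_2}{\sigma^2(1-\mu^2)}\right)$ for $x_1,x_2\ge0$, $I_0$ the zero-order modified Bessel function of the first kind. Level crossing rate: the time derivative $|\dot h_i|$ of each port envelope is modeled as zero-mean Gaussian with density $p_{|\dot h_i|}$ and variance $\pi^2\sigma^2f_D^2$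 ($f_D$ the maximum Doppler frequency); the joint density of derivative and value of the selected envelope is $p_{|\dot h|,|h|}(\dot x,x)=p_{|\dot h_1|}(\dot x)\int_0^x p_{|h_1|,|h_2|}(x,x_2)\,dx_2+p_{|\dot h_2|}(\dot x)\int_0^x p_{|h_1|,|h_2|}(x_1,x)\,dx_1$, and the LCR is $L(x_{\rm th})=\int_0^\infty \dot x\,p_{|\dot h|,|h|}(\dot x,x_{\rm th})\,d\dot x$. *)

theory Defs
  imports "HOL-Analysis.Analysis" "HOL-Probability.Probability"
begin

definition bessel_I0 :: "real \<Rightarrow> real" where
  "bessel_I0 z = (\<Sum>k. (z / 2) ^ (2 * k) / (fact k)\<^sup>2)"

definition lower_inc_gamma :: "real \<Rightarrow> real \<Rightarrow> real" where
  "lower_inc_gamma s x = integral {0..x} (\<lambda>t. t powr (s - 1) * exp (- t))"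

definition fas_joint_pdf :: "real \<Rightarrow> real \<Rightarrow> real \<Rightarrow> real \<Rightarrow> real" where
  "fas_joint_pdf \<sigma> \<mu> x1 x2 =
     (if 0 \<le> x1 \<and> 0 \<le> x2 then
        4 * x1 * x2 / (\<sigma> ^ 4 * (1 - \<mu>\<^sup>2))
        * exp (- (x1\<^sup>2 + x2\<^sup>2) / (\<sigma>\<^sup>2 * (1 - \<mu>\<^sup>2)))
        * bessel_I0 (2 * \<mu> * x1 * x2 / (\<sigma>\<^sup>2 * (1 - \<mu>\<^sup>2)))
      else 0)"

text \<open>Density of the envelope derivative of port i: zero-mean Gaussian with variance
  pi^2 sigma^2 f_D^2 (same for both ports).\<close>
definition fas_deriv_pdf :: "real \<Rightarrow> real \<Rightarrow> real \<Rightarrow> real" where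
  "fas_deriv_pdf \<sigma> fD xd = normal_density 0 (pi * \<sigma> * fD) xd"

text \<open>Joint density of derivative and value of the selected envelope max(|h1|,|h2|).\<close>
definition fas_sel_joint_pdf :: "real \<Rightarrow> real \<Rightarrow> real \<Rightarrow> real \<Rightarrow> real \<Rightarrow> real" where
  "fas_sel_joint_pdf \<sigma> \<mu> fD xd x =
     fas_deriv_pdf \<sigma> fD xd * integral {0..x} (\<lambda>x2. fas_joint_pdf \<sigma> \<mu> x x2)
   + fas_deriv_pdf \<sigma> fD xd * integral {0..x} (\<lambda>x1. fas_joint_pdf \<sigma> \<mu> x1 x)"

definition fas_lcr :: "real \<Rightarrow> real \<Rightarrow> real \<Rightarrow> real \<Rightarrow> real" where
  "fas_lcr \<sigma> \<mu> fD xth = integral {0..} (\<lambda>xd. xd * fas_sel_joint_pdf \<sigma> \<mu> fD xd xth)"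

end

theory Submission
  imports Defs "HOL-Real_Asymp.Real_Asymp"
begin

text \<open>By the symmetry of the joint envelope density both ports contribute the same integral
  \<open>J = \<integral>\<^sub>0\<^sup>x p(x, y) dy\<close>, and the derivative factor is the first moment of a half-normal
  density, so the level crossing rate is \<open>\<surd>(2\<pi>) \<sigma> f\<^sub>D J\<close>. Expanding \<open>I\<^sub>0\<close> into its power
  series, the integrand of \<open>J\<close> becomes a series of odd powers of \<open>y\<close> times a Gaussian, dominated
  on \<open>[0, x]\<close>, so it can be integrated term by term; the substitution
  \<open>t = y\<^sup>2 / (\<sigma>\<^sup>2 (1 - \<mu>\<^sup>2))\<close> turns the \<open>k\<close>-th term into \<open>\<gamma>(k + 1, x\<^sup>2 / (\<sigma>\<^sup>2 (1 - \<mu>\<^sup>2)))\<close>.\<close>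

lemma sums_integral_suminf:
  fixes f :: "nat \<Rightarrow> 'a::ordered_euclidean_space \<Rightarrow> 'b::banach"
  assumes cont: "\<And>k. continuous_on {a..b} (f k)"
    and bound: "\<And>k y. y \<in> {a..b} \<Longrightarrow> norm (f k y) \<le> M k"
    and summable: "summable M"
  shows "(\<lambda>k. integral {a..b} (f k)) sums integral {a..b} (\<lambda>y. \<Sum>k. f k y)"
proof -
  have "uniform_limit {a..b} (\<lambda>n y. \<Sum>k<n. f k y) (\<lambda>y. \<Sum>k. f k y) sequentially"
    by (rule Weierstrass_m_test) (use bound summable in auto)
  moreover have "continuous_on {a..b} (\<lambda>y. \<Sum>k<n. f k y)" for n
    by (intro continuous_intros cont)
  ultimately obtain I J
    where I: "\<And>n. ((\<lambda>y. \<Sum>k<n. f k y) has_integral I n) {a..b}"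
      and J: "((\<lambda>y. \<Sum>k. f k y) has_integral J) {a..b}" and "I \<longlonglongrightarrow> J"
    by (rule uniform_limit_integral) auto
  moreover have "I = (\<lambda>n. \<Sum>k<n. integral {a..b} (f k))"
  proof
    fix n
    have "I n = integral {a..b} (\<lambda>y. \<Sum>k<n. f k y)"
      by (simp add: integral_unique[OF I])
    also have "\<dots> = (\<Sum>k<n. integral {a..b} (f k))"
      by (rule integral_sum) (auto intro: integrable_continuous_interval cont)
    finally show "I n = (\<Sum>k<n. integral {a..b} (f k))" .
  qed
  ultimately show ?thesis
    using J by (simp add: sums_def integral_unique)
qed

lemma half_normal_moment_1:
  fixes s :: real
  assumes s: "s > 0"
  shows "((\<lambda>x. x * normal_density 0 s x) has_integral s / sqrt (2 * pi)) {0..}"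
proof -
  let ?F = "\<lambda>x. - s\<^sup>2 * normal_density 0 s x"
  have density: "normal_density 0 s x = exp (- x\<^sup>2 / (2 * s\<^sup>2)) / sqrt (2 * pi * s\<^sup>2)" for x
    by (simp add: normal_density_def)
  have deriv: "DERIV ?F x :> x * normal_density 0 s x" for x
    unfolding density using s
    by (auto intro!: derivative_eq_intros simp: field_simps power2_eq_square)
  have lim: "(?F \<longlongrightarrow> 0) at_top"
    unfolding density using s by real_asymp
  have "(\<integral>\<^sup>+x. ennreal (if x \<in> {0..} then x * normal_density 0 s x else 0) \<partial>lborel)
      = (\<integral>\<^sup>+x. ennreal (x * normal_density 0 s x) * indicator {0..} x \<partial>lborel)"
    by (intro nn_integral_cong) (simp split: split_indicator)
  also have "\<dots> = ennreal (0 - ?F 0)"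
    using deriv lim by (intro nn_integral_FTC_atLeast) auto
  also have "0 - ?F 0 = s / sqrt (2 * pi)"
    using s by (simp add: density real_sqrt_mult field_simps power2_eq_square)
  finally have "((\<lambda>x. if x \<in> {0..} then x * normal_density 0 s x else 0)
      has_integral s / sqrt (2 * pi)) UNIV"
    by (intro nn_integral_has_integral) (use s in auto)
  then show ?thesis
    by (simp only: has_integral_restrict_UNIV)
qed

lemma lower_inc_gamma_of_nat:
  "lower_inc_gamma (real k + 1) u = integral {0..u} (\<lambda>t. t ^ k * exp (- t))"
  unfolding lower_inc_gamma_def
proof (rule integral_spike[of "{0}"])
  show "t ^ k * exp (- t) = t powr (real k + 1 - 1) * exp (- t)" if "t \<in> {0..u} - {0}" for t
    using that by (auto simp: powr_realpow)
qed simp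

lemma has_integral_odd_power_times_gaussian:
  fixes a x :: real
  assumes a: "a > 0" and x: "x \<ge> 0"
  shows "((\<lambda>y. y ^ (2 * k + 1) * exp (- y\<^sup>2 / a))
           has_integral a ^ (k + 1) / 2 * lower_inc_gamma (real k + 1) (x\<^sup>2 / a)) {0..x}"
proof -
  let ?f = "\<lambda>t::real. t ^ k * exp (- t)"
  have "((\<lambda>y. (2 * y / a) *\<^sub>R ?f (y\<^sup>2 / a)) has_integral integral {0\<^sup>2 / a..x\<^sup>2 / a} ?f) {0..x}"
  proof (rule has_integral_substitution)
    show "(\<lambda>y. y\<^sup>2 / a) ` {0..x} \<subseteq> {0..x\<^sup>2 / a}"
      using a by (auto intro!: divide_right_mono power_mono)
    show "((\<lambda>y. y\<^sup>2 / a) has_field_derivative 2 * y / a) (at y within {0..x})" for y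
      using a by (auto intro!: derivative_eq_intros)
  qed (use a x in \<open>auto intro!: continuous_intros\<close>)
  then have "((\<lambda>y. a ^ (k + 1) / 2 * ((2 * y / a) *\<^sub>R ?f (y\<^sup>2 / a)))
      has_integral a ^ (k + 1) / 2 * lower_inc_gamma (real k + 1) (x\<^sup>2 / a)) {0..x}"
    by (intro has_integral_mult_right) (simp add: lower_inc_gamma_of_nat)
  moreover have "a ^ (k + 1) / 2 * ((2 * y / a) *\<^sub>R ?f (y\<^sup>2 / a)) = y ^ (2 * k + 1) * exp (- y\<^sup>2 / a)"
    for y
    using a by (simp add: power_divide power_mult field_simps power2_eq_square)
  ultimately show ?thesis
    by simp
qed

lemma sums_integral_odd_power_series_times_gaussian:
  fixes a x :: real and c :: "nat \<Rightarrow> real"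
  assumes a: "a > 0" and x: "x \<ge> 0" and summable: "summable (\<lambda>k. \<bar>c k\<bar> * x ^ (2 * k + 1))"
  shows "(\<lambda>k. c k * (a ^ (k + 1) / 2 * lower_inc_gamma (real k + 1) (x\<^sup>2 / a)))
           sums integral {0..x} (\<lambda>y. \<Sum>k. c k * (y ^ (2 * k + 1) * exp (- y\<^sup>2 / a)))"
proof -
  have "(\<lambda>k. integral {0..x} (\<lambda>y. c k * (y ^ (2 * k + 1) * exp (- y\<^sup>2 / a))))
      sums integral {0..x} (\<lambda>y. \<Sum>k. c k * (y ^ (2 * k + 1) * exp (- y\<^sup>2 / a)))"
  proof (rule sums_integral_suminf[OF _ _ summable])
    show "norm (c k * (y ^ (2 * k + 1) * exp (- y\<^sup>2 / a))) \<le> \<bar>c k\<bar> * x ^ (2 * k + 1)"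
      if y: "y \<in> {0..x}" for k y
    proof -
      have "y ^ (2 * k + 1) * exp (- y\<^sup>2 / a) \<le> x ^ (2 * k + 1) * 1"
        using y a by (intro mult_mono power_mono) auto
      then show ?thesis
        using y by (simp add: abs_mult mult_left_mono)
    qed
  qed (use a in \<open>auto intro!: continuous_intros\<close>)
  moreover have "integral {0..x} (\<lambda>y. c k * (y ^ (2 * k + 1) * exp (- y\<^sup>2 / a)))
      = c k * (a ^ (k + 1) / 2 * lower_inc_gamma (real k + 1) (x\<^sup>2 / a))" for k
    using has_integral_odd_power_times_gaussian[OF a x, of k] by (simp add: integral_unique)
  ultimately show ?thesis
    by (simp only:)
qed

lemma summable_power_div_fact_squared: "summable (\<lambda>k. w ^ k / (fact k)\<^sup>2 :: real)"
proof (rule summable_comparison_test)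
  show "summable (\<lambda>k. \<bar>w\<bar> ^ k / fact k)"
    using summable_exp[of "\<bar>w\<bar>"] by (simp add: field_simps)
  have "\<bar>w\<bar> ^ k / (fact k * fact k) \<le> \<bar>w\<bar> ^ k / fact k" for k
    by (intro divide_left_mono) (auto simp: mult_le_cancel_left1)
  then show "\<exists>N. \<forall>k\<ge>N. norm (w ^ k / (fact k)\<^sup>2) \<le> \<bar>w\<bar> ^ k / fact k"
    by (simp add: power_abs power2_eq_square)
qed

lemma bessel_I0_sums: "(\<lambda>k. (z / 2) ^ (2 * k) / (fact k)\<^sup>2) sums bessel_I0 z"
  unfolding bessel_I0_def power_mult
  by (rule summable_sums) (rule summable_power_div_fact_squared)

lemma power_divide_even_times_power:
  fixes a z :: real
  assumes "a \<noteq> 0"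
  shows "(z / a) ^ (2 * k) * a ^ (k + 1) = z ^ (2 * k) / a powi (int k - 1)"
  using assms by (simp add: power_int_diff power_mult power_divide power_add field_simps power2_eq_square)

lemma fas_joint_pdf_commute: "fas_joint_pdf \<sigma> \<mu> x y = fas_joint_pdf \<sigma> \<mu> y x"
  unfolding fas_joint_pdf_def by (simp add: ac_simps)

lemma fas_joint_pdf_sums:
  fixes \<sigma> \<mu> x y :: real
  assumes x: "x \<ge> 0" and y: "y \<ge> 0"
  defines "a \<equiv> \<sigma>\<^sup>2 * (1 - \<mu>\<^sup>2)"
  shows "(\<lambda>k. 4 * x / (\<sigma> ^ 4 * (1 - \<mu>\<^sup>2)) * exp (- x\<^sup>2 / a) * ((\<mu> * x / a) ^ (2 * k) / (fact k)\<^sup>2)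
           * (y ^ (2 * k + 1) * exp (- y\<^sup>2 / a))) sums fas_joint_pdf \<sigma> \<mu> x y"
proof -
  let ?P = "4 * x * y / (\<sigma> ^ 4 * (1 - \<mu>\<^sup>2)) * exp (- (x\<^sup>2 + y\<^sup>2) / a)"
  have "(\<lambda>k. ?P * ((\<mu> * x * y / a) ^ (2 * k) / (fact k)\<^sup>2)) sums (?P * bessel_I0 (2 * \<mu> * x * y / a))"
    using bessel_I0_sums[of "2 * \<mu> * x * y / a"] by (intro sums_mult) (simp add: mult.assoc)
  moreover have "fas_joint_pdf \<sigma> \<mu> x y = ?P * bessel_I0 (2 * \<mu> * x * y / a)"
    using x y unfolding fas_joint_pdf_def a_def by simp
  moreover have "exp (- (x\<^sup>2 + y\<^sup>2) / a) = exp (- x\<^sup>2 / a) * exp (- y\<^sup>2 / a)"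
    by (simp add: exp_add[symmetric] add_divide_distrib diff_divide_distrib)
  ultimately show ?thesis
    by (simp add: power_mult_distrib power_divide power_add field_simps)
qed

lemma fas_marginal_integral:
  fixes \<sigma> \<mu> x :: real
  assumes \<sigma>: "\<sigma> > 0" and \<mu>: "\<bar>\<mu>\<bar> < 1" and x: "x > 0"
  defines "a \<equiv> \<sigma>\<^sup>2 * (1 - \<mu>\<^sup>2)"
  shows "integral {0..x} (\<lambda>y. fas_joint_pdf \<sigma> \<mu> x y) =
    2 * x / (\<sigma> ^ 4 * (1 - \<mu>\<^sup>2)) * exp (- x\<^sup>2 / a)
    * (\<Sum>k. (\<mu> * x) ^ (2 * k) / ((fact k)\<^sup>2 * a powi (int k - 1))
            * lower_inc_gamma (real k + 1) (x\<^sup>2 / a))"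
proof -
  have a: "a > 0"
    unfolding a_def using \<sigma> \<mu> by (simp add: abs_square_less_1)
  define C where "C = 4 * x / (\<sigma> ^ 4 * (1 - \<mu>\<^sup>2)) * exp (- x\<^sup>2 / a)"
  define c where "c k = C * ((\<mu> * x / a) ^ (2 * k) / (fact k)\<^sup>2)" for k
  define t where "t k = (\<mu> * x) ^ (2 * k) / ((fact k)\<^sup>2 * a powi (int k - 1))
    * lower_inc_gamma (real k + 1) (x\<^sup>2 / a)" for k
  have C: "C > 0"
    unfolding C_def using \<sigma> \<mu> x by (simp add: abs_square_less_1)
  have "summable (\<lambda>k. C * x * (((\<mu> * x / a)\<^sup>2 * x\<^sup>2) ^ k / (fact k)\<^sup>2))"
    by (intro summable_mult summable_power_div_fact_squared)
  moreover have "\<bar>c k\<bar> = c k" for k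
    using C by (simp add: c_def power_mult)
  ultimately have "summable (\<lambda>k. \<bar>c k\<bar> * x ^ (2 * k + 1))"
    by (simp add: c_def power_mult_distrib power_mult[symmetric] power_add mult_ac)
  then have "(\<lambda>k. c k * (a ^ (k + 1) / 2 * lower_inc_gamma (real k + 1) (x\<^sup>2 / a)))
      sums integral {0..x} (\<lambda>y. \<Sum>k. c k * (y ^ (2 * k + 1) * exp (- y\<^sup>2 / a)))"
    using a x by (intro sums_integral_odd_power_series_times_gaussian) auto
  moreover have "integral {0..x} (\<lambda>y. fas_joint_pdf \<sigma> \<mu> x y)
      = integral {0..x} (\<lambda>y. \<Sum>k. c k * (y ^ (2 * k + 1) * exp (- y\<^sup>2 / a)))"
    using fas_joint_pdf_sums[of x _ \<sigma> \<mu>] x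
    by (intro integral_cong) (simp add: sums_iff C_def c_def a_def mult.assoc)
  moreover have "c k * (a ^ (k + 1) / 2 * lower_inc_gamma (real k + 1) (x\<^sup>2 / a)) = C / 2 * t k" for k
  proof -
    have "c k * (a ^ (k + 1) / 2 * lower_inc_gamma (real k + 1) (x\<^sup>2 / a))
        = C / 2 * ((\<mu> * x / a) ^ (2 * k) * a ^ (k + 1) / (fact k)\<^sup>2 * lower_inc_gamma (real k + 1) (x\<^sup>2 / a))"
      by (simp add: c_def)
    also have "\<dots> = C / 2 * t k"
      using a by (subst power_divide_even_times_power) (simp_all add: t_def)
    finally show ?thesis .
  qed
  ultimately have "(\<lambda>k. C / 2 * t k) sums integral {0..x} (\<lambda>y. fas_joint_pdf \<sigma> \<mu> x y)"
    by simp
  then have "(\<lambda>k. 2 / C * (C / 2 * t k)) sums (2 / C * integral {0..x} (\<lambda>y. fas_joint_pdf \<sigma> \<mu> x y))"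
    by (rule sums_mult)
  then have "integral {0..x} (\<lambda>y. fas_joint_pdf \<sigma> \<mu> x y) = C / 2 * (\<Sum>k. t k)"
    using C by (simp add: sums_iff)
  then show ?thesis
    by (simp add: C_def t_def)
qed

lemma fas_lcr_eq_marginal_integral:
  fixes \<sigma> \<mu> fD x :: real
  assumes "\<sigma> > 0" and "fD > 0"
  shows "fas_lcr \<sigma> \<mu> fD x = sqrt (2 * pi) * \<sigma> * fD * integral {0..x} (\<lambda>y. fas_joint_pdf \<sigma> \<mu> x y)"
proof -
  let ?J = "integral {0..x} (\<lambda>y. fas_joint_pdf \<sigma> \<mu> x y)"
  have "fas_sel_joint_pdf \<sigma> \<mu> fD xd x = normal_density 0 (pi * \<sigma> * fD) xd * (2 * ?J)" for xd
    unfolding fas_sel_joint_pdf_def fas_deriv_pdf_def fas_joint_pdf_commute[of _ _ _ x] by simp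
  then have "fas_lcr \<sigma> \<mu> fD x = integral {0..} (\<lambda>xd. xd * normal_density 0 (pi * \<sigma> * fD) xd) * (2 * ?J)"
    by (simp add: fas_lcr_def integral_mult_left flip: mult.assoc)
  also have "\<dots> = pi * \<sigma> * fD / sqrt (2 * pi) * (2 * ?J)"
    using assms half_normal_moment_1[of "pi * \<sigma> * fD"] by (simp add: integral_unique)
  also have "\<dots> = sqrt (2 * pi) * \<sigma> * fD * ?J"
    by (simp add: field_simps real_sqrt_mult)
  finally show ?thesis .
qed

theorem corollary3:
  fixes \<sigma> \<mu> fD xth :: real
  assumes "\<sigma> > 0" and "0 < \<mu>" and "\<mu> < 1" and "fD > 0" and "xth > 0"
  shows "fas_lcr \<sigma> \<mu> fD xth =
    2 * sqrt (2 * pi) * fD * xth / (\<sigma> ^ 3 * (1 - \<mu>\<^sup>2))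
    * exp (- xth\<^sup>2 / (\<sigma>\<^sup>2 * (1 - \<mu>\<^sup>2)))
    * (\<Sum>k. (\<mu> * xth) ^ (2 * k) / ((fact k)\<^sup>2 * (\<sigma>\<^sup>2 * (1 - \<mu>\<^sup>2)) powi (int k - 1))
            * lower_inc_gamma (real k + 1) (xth\<^sup>2 / (\<sigma>\<^sup>2 * (1 - \<mu>\<^sup>2))))"
proof -
  define a where "a = \<sigma>\<^sup>2 * (1 - \<mu>\<^sup>2)"
  define S where "S = (\<Sum>k. (\<mu> * xth) ^ (2 * k) / ((fact k)\<^sup>2 * a powi (int k - 1))
    * lower_inc_gamma (real k + 1) (xth\<^sup>2 / a))"
  have "1 - \<mu>\<^sup>2 > 0"
    using assms by (simp add: abs_square_less_1)
  have "fas_lcr \<sigma> \<mu> fD xth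
      = sqrt (2 * pi) * \<sigma> * fD * (2 * xth / (\<sigma> ^ 4 * (1 - \<mu>\<^sup>2)) * exp (- xth\<^sup>2 / a) * S)"
    using assms by (simp add: fas_lcr_eq_marginal_integral fas_marginal_integral a_def S_def)
  also have "\<dots> = 2 * sqrt (2 * pi) * fD * xth / (\<sigma> ^ 3 * (1 - \<mu>\<^sup>2)) * exp (- xth\<^sup>2 / a) * S"
    using \<open>\<sigma> > 0\<close> \<open>1 - \<mu>\<^sup>2 > 0\<close> by (simp add: field_simps eval_nat_numeral)
  finally show ?thesis
    unfolding a_def S_def .
qed

end
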